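(* Let $(M,\bullet)$ be a monoid with unit $e$. Then ${\sf T}M$, equipped with the partial compositions $\circ_i$ and the right actions of the symmetric groups described in the context, is a symmetric set-operad (with unit $(e)\in{\sf T}M(1)$). Moreover, the assignment $M\mapsto {\sf T}M$, $\theta\mapsto{\sf T}\theta$ is a functor from the category of monoids (with monoid morphisms) to the category of set-operads (with set-operad morphisms). Furthermore, ${\sf T}$ preserves injections and surjections: if $\theta:M\to N$ is an injective (resp. surjective) monoid morphism, then ${\sf T}\theta$ is injective (resp. surjective).
   Context: For a monoid $(M,\bullet)$, let ${\sf T}M:=\biguplus_{n\geq 1}{\sf T}M(n)$ where ${\sf T}M(n):=M^n$ is the set of words $(x_1,\dots,x_n)$ of length $n$ over the alphabet $M$ (elements of arity $n$). For $x\in{\sf T}M(n)$, $y\in{\sf T}M(m)$ and $1\leq i\leq n$, define $x\circ_i y:=(x_1,\dots,x_{i-1},x_i\bullet y_1,\dots,x_i\bullet y_m,x_{i+1},\dots,x_n)\in{\sf T}M(n+m-1)$. For $x\in{\sf T}M(n)$ and $\sigma\in\mathfrak{S}_n$, define $x\cdot\sigma:=(x_{\sigma(1)},\dots,x_{\sigma(n)})$. For a monoid morphism $\theta:M\to N$, define ${\sf T}\theta:{\sf T}M\to{\sf T}N$ by ${\sf T}\theta(x_1,\dots,x_n):=(\theta(x_1),\dots,\theta(x_n))$. *)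

theory Defs
  imports "HOL-Combinatorics.Permutations"
begin

text \<open>Partial composition of permutations: for sigma in S_n, tau in S_m and 1 \<le> i \<le> n,
 the permutation of {1..n+m-1} obtained by substituting tau into the i-th letter of sigma
 (identity outside {1..n+m-1}).\<close>
definition perm_comp :: "nat \<Rightarrow> nat \<Rightarrow> (nat \<Rightarrow> nat) \<Rightarrow> nat \<Rightarrow> (nat \<Rightarrow> nat) \<Rightarrow> nat \<Rightarrow> nat" where
  "perm_comp n m \<sigma> i \<tau> p =
     (let sh = (\<lambda>q. if q < \<sigma> i then q else q + m - 1) in
      if p < 1 then p
      else if p < i then sh (\<sigma> p)
      else if p < i + m then \<sigma> i + \<tau> (p - i + 1) - 1
      else if p \<le> n + m - 1 then sh (\<sigma> (p - m + 1))
      else p)"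

definition sym_set_operad ::
  "(nat \<Rightarrow> 'x set) \<Rightarrow> ('x \<Rightarrow> nat \<Rightarrow> 'x \<Rightarrow> 'x) \<Rightarrow> ('x \<Rightarrow> (nat \<Rightarrow> nat) \<Rightarrow> 'x) \<Rightarrow> 'x \<Rightarrow> bool" where
  "sym_set_operad Op pc act u \<longleftrightarrow>
     \<comment> \<open>graded set, arities \<ge> 1\<close>
     Op 0 = {} \<and>
     (\<forall>n m. n \<noteq> m \<longrightarrow> Op n \<inter> Op m = {}) \<and>
     \<comment> \<open>partial compositions are well-typed\<close>
     (\<forall>n m x y i. x \<in> Op n \<longrightarrow> y \<in> Op m \<longrightarrow> 1 \<le> i \<longrightarrow> i \<le> n \<longrightarrow> pc x i y \<in> Op (n + m - 1)) \<and>
     \<comment> \<open>unit\<close>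
     u \<in> Op 1 \<and>
     (\<forall>n x. x \<in> Op n \<longrightarrow> pc u 1 x = x) \<and>
     (\<forall>n x i. x \<in> Op n \<longrightarrow> 1 \<le> i \<longrightarrow> i \<le> n \<longrightarrow> pc x i u = x) \<and>
     \<comment> \<open>sequential associativity\<close>
     (\<forall>n m k x y z i j. x \<in> Op n \<longrightarrow> y \<in> Op m \<longrightarrow> z \<in> Op k \<longrightarrow>
        1 \<le> i \<longrightarrow> i \<le> n \<longrightarrow> 1 \<le> j \<longrightarrow> j \<le> m \<longrightarrow>
        pc (pc x i y) (i + j - 1) z = pc x i (pc y j z)) \<and>
     \<comment> \<open>parallel associativity\<close>
     (\<forall>n m k x y z i j. x \<in> Op n \<longrightarrow> y \<in> Op m \<longrightarrow> z \<in> Op k \<longrightarrow>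
        1 \<le> i \<longrightarrow> i < j \<longrightarrow> j \<le> n \<longrightarrow>
        pc (pc x i y) (j + m - 1) z = pc (pc x j z) i y) \<and>
     \<comment> \<open>right actions of the symmetric groups\<close>
     (\<forall>n x \<sigma>. x \<in> Op n \<longrightarrow> \<sigma> permutes {1..n} \<longrightarrow> act x \<sigma> \<in> Op n) \<and>
     (\<forall>n x. x \<in> Op n \<longrightarrow> act x id = x) \<and>
     (\<forall>n x \<sigma> \<tau>. x \<in> Op n \<longrightarrow> \<sigma> permutes {1..n} \<longrightarrow> \<tau> permutes {1..n} \<longrightarrow>
        act (act x \<sigma>) \<tau> = act x (\<sigma> \<circ> \<tau>)) \<and>
     \<comment> \<open>equivariance of partial compositions\<close>
     (\<forall>n m x y \<sigma> \<tau> i. x \<in> Op n \<longrightarrow> y \<in> Op m \<longrightarrow> \<sigma> permutes {1..n} \<longrightarrow> \<tau> permutes {1..m} \<longrightarrow>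
        1 \<le> i \<longrightarrow> i \<le> n \<longrightarrow>
        pc (act x \<sigma>) i (act y \<tau>) = act (pc x (\<sigma> i) y) (perm_comp n m \<sigma> i \<tau>))"

definition operad_morphism ::
  "(nat \<Rightarrow> 'x set) \<Rightarrow> ('x \<Rightarrow> nat \<Rightarrow> 'x \<Rightarrow> 'x) \<Rightarrow> ('x \<Rightarrow> (nat \<Rightarrow> nat) \<Rightarrow> 'x) \<Rightarrow> 'x \<Rightarrow>
   (nat \<Rightarrow> 'y set) \<Rightarrow> ('y \<Rightarrow> nat \<Rightarrow> 'y \<Rightarrow> 'y) \<Rightarrow> ('y \<Rightarrow> (nat \<Rightarrow> nat) \<Rightarrow> 'y) \<Rightarrow> 'y \<Rightarrow>
   ('x \<Rightarrow> 'y) \<Rightarrow> bool" where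
  "operad_morphism Op pc act u Op' pc' act' u' f \<longleftrightarrow>
     (\<forall>n x. x \<in> Op n \<longrightarrow> f x \<in> Op' n) \<and>
     (\<forall>n m x y i. x \<in> Op n \<longrightarrow> y \<in> Op m \<longrightarrow> 1 \<le> i \<longrightarrow> i \<le> n \<longrightarrow>
        f (pc x i y) = pc' (f x) i (f y)) \<and>
     (\<forall>n x \<sigma>. x \<in> Op n \<longrightarrow> \<sigma> permutes {1..n} \<longrightarrow> f (act x \<sigma>) = act' (f x) \<sigma>) \<and>
     f u = u'"

definition monoid_hom :: "('a::monoid_mult \<Rightarrow> 'b::monoid_mult) \<Rightarrow> bool" where
  "monoid_hom \<theta> \<longleftrightarrow> \<theta> 1 = 1 \<and> (\<forall>a b. \<theta> (a * b) = \<theta> a * \<theta> b)"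

text \<open>Words (x_1,...,x_n) are lists; x_i is xs ! (i-1).\<close>
definition TM :: "nat \<Rightarrow> 'a::monoid_mult list set" where
  "TM n = {xs. 1 \<le> n \<and> length xs = n}"

definition T_comp :: "'a::monoid_mult list \<Rightarrow> nat \<Rightarrow> 'a list \<Rightarrow> 'a list" where
  "T_comp x i y = take (i - 1) x @ map (\<lambda>b. (x ! (i - 1)) * b) y @ drop i x"

definition T_act :: "'a::monoid_mult list \<Rightarrow> (nat \<Rightarrow> nat) \<Rightarrow> 'a list" where
  "T_act x \<sigma> = map (\<lambda>p. x ! (\<sigma> p - 1)) [1..<length x + 1]"

definition T_unit :: "'a::monoid_mult list" where
  "T_unit = [1]"

definition T_map :: "('a::monoid_mult \<Rightarrow> 'b::monoid_mult) \<Rightarrow> 'a list \<Rightarrow> 'b list" where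
  "T_map \<theta> xs = map \<theta> xs"

end

theory Submission
  imports Defs
begin

text \<open>Everything is computed letter by letter. A partial composition x \<circ>_i y replaces
  the letter x_i by the word x_i y, so both associativity laws reduce to associativity of
  the monoid product, and the unit (e) acts trivially because e is the unit of M. An action of
  a permutation only reorders letters, so equivariance amounts to checking, block by block of
  positions, that the partial composition of permutations sends every letter to its place.
  Since T\<theta> is letterwise application of \<theta>, it commutes with all operations as soon as
  \<theta> is a monoid morphism, and injectivity and surjectivity transfer letterwise.\<close>

lemma T_comp_append_Cons: "T_comp (p @ c # s) (Suc (length p)) y = p @ map ((*) c) y @ s"
  unfolding T_comp_def by simp

lemma split_list_at: "i < length xs \<Longrightarrow> \<exists>p c s. xs = p @ c # s \<and> length p = i"
  by (metis id_take_nth_drop length_take min.absorb4)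

lemma length_T_comp: "1 \<le> i \<Longrightarrow> i \<le> length x \<Longrightarrow> length (T_comp x i y) = length x + length y - 1"
  unfolding T_comp_def by auto

lemma nth_T_comp:
  assumes "1 \<le> i" "i \<le> length x" "q < length x + length y - 1"
  shows "T_comp x i y ! q =
    (if q < i - 1 then x ! q
     else if q < i - 1 + length y then x ! (i - 1) * y ! (q - (i - 1))
     else x ! (q + 1 - length y))"
  using assms unfolding T_comp_def by (auto simp: nth_append min_def)

text \<open>The letter x_k with k \<noteq> s keeps its value in x \<circ>_s y and moves to the position
  given by the shift used in the definition of perm_comp.\<close>
lemma nth_T_comp_shift:
  assumes "1 \<le> s" "s \<le> length x" "1 \<le> k" "k \<le> length x" "k \<noteq> s" "1 \<le> length y"
  shows "T_comp x s y ! ((if k < s then k else k + length y - 1) - 1) = x ! (k - 1)"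
proof (cases "k < s")
  case True
  then show ?thesis using assms nth_T_comp[of s x "k - 1" y] by auto
next
  case False
  have "s - 1 + length y \<le> k + length y - 1 - 1" "k + length y - 1 - 1 + 1 - length y = k - 1"
    "k + length y - 1 - 1 < length x + length y - 1"
    using False assms by linarith+
  then show ?thesis
    using False assms nth_T_comp[of s x "k + length y - 1 - 1" y] by (simp del: One_nat_def)
qed

lemma nth_T_comp_inside:
  assumes "1 \<le> s" "s \<le> length x" "1 \<le> r" "r \<le> length y"
  shows "T_comp x s y ! (s - 1 + (r - 1)) = x ! (s - 1) * y ! (r - 1)"
proof -
  have "s - 1 + (r - 1) < length x + length y - 1"
    "\<not> s - 1 + (r - 1) < s - 1" "s - 1 + (r - 1) < s - 1 + length y"
    using assms by linarith+
  then show ?thesis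
    using nth_T_comp[of s x "s - 1 + (r - 1)" y] assms by simp
qed

lemma length_T_act [simp]: "length (T_act x \<sigma>) = length x"
  unfolding T_act_def by (simp del: upt_Suc)

lemma nth_T_act: "q < length x \<Longrightarrow> T_act x \<sigma> ! q = x ! (\<sigma> (Suc q) - 1)"
  unfolding T_act_def by (simp del: upt_Suc)

lemma permutes_interval_bounds:
  "\<sigma> permutes {1..n} \<Longrightarrow> 1 \<le> p \<Longrightarrow> p \<le> n \<Longrightarrow> 1 \<le> \<sigma> p \<and> \<sigma> p \<le> n"
  using permutes_in_image[of \<sigma> "{1..n}" p] by auto

lemma T_comp_assoc_sequential:
  assumes "1 \<le> i" "i \<le> length x" "1 \<le> j" "j \<le> length y"
  shows "T_comp (T_comp x i y) (i + j - 1) z = T_comp x i (T_comp y j z)"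
proof -
  have "i - 1 < length x"
    using assms by linarith
  then obtain p c s where x: "x = p @ c # s" "length p = i - 1"
    using split_list_at by blast
  have "j - 1 < length y"
    using assms by linarith
  then obtain p' c' s' where y: "y = p' @ c' # s'" "length p' = j - 1"
    using split_list_at by blast
  have i: "i = Suc (length p)" and j: "j = Suc (length p')"
    using x y assms by auto
  have xy: "T_comp x i y = (p @ map ((*) c) p') @ (c * c') # (map ((*) c) s' @ s)"
    using x y i j by (simp add: T_comp_append_Cons)
  have pos: "i + j - 1 = Suc (length (p @ map ((*) c) p'))"
    using i j by simp
  have "T_comp (T_comp x i y) (i + j - 1) z
      = (p @ map ((*) c) p') @ map ((*) (c * c')) z @ (map ((*) c) s' @ s)"
    unfolding xy pos by (rule T_comp_append_Cons)
  moreover have "T_comp x i (T_comp y j z) = p @ map ((*) c) (p' @ map ((*) c') z @ s') @ s"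
    using x y i j by (simp add: T_comp_append_Cons)
  ultimately show ?thesis by (simp add: mult.assoc)
qed

lemma T_comp_assoc_parallel:
  assumes "1 \<le> i" "i < j" "j \<le> length x"
  shows "T_comp (T_comp x i y) (j + length y - 1) z = T_comp (T_comp x j z) i y"
proof -
  have "i - 1 < length x"
    using assms by linarith
  then obtain p c s where x: "x = p @ c # s" "length p = i - 1"
    using split_list_at by blast
  moreover have "j - i - 1 < length s"
    using x assms by auto
  ultimately obtain q d t where s: "s = q @ d # t" "length q = j - i - 1"
    using split_list_at by blast
  have i: "i = Suc (length p)" and j: "j = Suc (length (p @ c # q))"
    using x s assms by auto
  have xy: "T_comp x i y = (p @ map ((*) c) y @ q) @ d # t"
    using x s i by (simp add: T_comp_append_Cons)
  have pos: "j + length y - 1 = Suc (length (p @ map ((*) c) y @ q))"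
    using j by simp
  have "T_comp (T_comp x i y) (j + length y - 1) z = (p @ map ((*) c) y @ q) @ map ((*) d) z @ t"
    unfolding xy pos by (rule T_comp_append_Cons)
  moreover have "T_comp x j z = p @ c # (q @ map ((*) d) z @ t)"
    using x s j T_comp_append_Cons[of "p @ c # q" d t z] by simp
  then have "T_comp (T_comp x j z) i y = p @ map ((*) c) y @ (q @ map ((*) d) z @ t)"
    using i by (simp add: T_comp_append_Cons)
  ultimately show ?thesis by simp
qed

lemma T_comp_unit_left: "T_comp T_unit 1 x = x"
  by (simp add: T_comp_def T_unit_def)

lemma T_comp_unit_right: "1 \<le> i \<Longrightarrow> i \<le> length x \<Longrightarrow> T_comp x i T_unit = x"
  using id_take_nth_drop[of "i - 1" x] by (simp add: T_comp_def T_unit_def)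

lemma T_act_id: "T_act x id = x"
  by (rule nth_equalityI) (auto simp: nth_T_act)

lemma T_act_T_act:
  assumes "length x = n" "\<tau> permutes {1..n}"
  shows "T_act (T_act x \<sigma>) \<tau> = T_act x (\<sigma> \<circ> \<tau>)"
proof (rule nth_equalityI)
  fix q assume "q < length (T_act (T_act x \<sigma>) \<tau>)"
  then have q: "q < n" using assms by simp
  then have "1 \<le> \<tau> (Suc q)" "\<tau> (Suc q) \<le> n"
    using permutes_interval_bounds[OF assms(2), of "Suc q"] by auto
  then show "T_act (T_act x \<sigma>) \<tau> ! q = T_act x (\<sigma> \<circ> \<tau>) ! q"
    using q assms nth_T_act[of "\<tau> (Suc q) - 1" x \<sigma>] by (simp add: nth_T_act)
qed simp

lemma perm_comp_before:
  "1 \<le> p \<Longrightarrow> p < i \<Longrightarrow>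
    perm_comp n m \<sigma> i \<tau> p = (if \<sigma> p < \<sigma> i then \<sigma> p else \<sigma> p + m - 1)"
  unfolding perm_comp_def by (simp add: Let_def)

lemma perm_comp_inside:
  "1 \<le> i \<Longrightarrow> i \<le> p \<Longrightarrow> p < i + m \<Longrightarrow> perm_comp n m \<sigma> i \<tau> p = \<sigma> i + \<tau> (p - i + 1) - 1"
  unfolding perm_comp_def by (simp add: Let_def)

lemma perm_comp_after:
  "1 \<le> i \<Longrightarrow> i + m \<le> p \<Longrightarrow> p \<le> n + m - 1 \<Longrightarrow>
    perm_comp n m \<sigma> i \<tau> p =
      (if \<sigma> (p - m + 1) < \<sigma> i then \<sigma> (p - m + 1) else \<sigma> (p - m + 1) + m - 1)"
  unfolding perm_comp_def by (simp add: Let_def)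

lemma nth_T_comp_T_act:
  assumes x: "length x = n" and y: "length y = m" and i: "1 \<le> i" "i \<le> n" and q: "q < n + m - 1"
  shows "T_comp (T_act x \<sigma>) i (T_act y \<tau>) ! q =
    (if q < i - 1 then x ! (\<sigma> (Suc q) - 1)
     else if q < i - 1 + m then x ! (\<sigma> i - 1) * y ! (\<tau> (Suc (q - (i - 1))) - 1)
     else x ! (\<sigma> (Suc q - m + 1) - 1))"
proof -
  have "\<not> q < i - 1 + m \<Longrightarrow> Suc (q + 1 - m) = Suc q - m + 1"
    using i by auto
  then show ?thesis
    using nth_T_comp[of i "T_act x \<sigma>" q "T_act y \<tau>"] assms by (auto simp: nth_T_act)
qed

lemma T_comp_T_act:
  assumes x: "length x = n" and y: "length y = m" "1 \<le> m"
    and \<sigma>: "\<sigma> permutes {1..n}" and \<tau>: "\<tau> permutes {1..m}" and i: "1 \<le> i" "i \<le> n"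
  shows "T_comp (T_act x \<sigma>) i (T_act y \<tau>) = T_act (T_comp x (\<sigma> i) y) (perm_comp n m \<sigma> i \<tau>)"
proof (rule nth_equalityI)
  have \<sigma>i: "1 \<le> \<sigma> i" "\<sigma> i \<le> n"
    using permutes_interval_bounds[OF \<sigma> i] by auto
  show "length (T_comp (T_act x \<sigma>) i (T_act y \<tau>)) =
      length (T_act (T_comp x (\<sigma> i) y) (perm_comp n m \<sigma> i \<tau>))"
    using assms \<sigma>i by (simp add: length_T_comp)
  fix q assume "q < length (T_comp (T_act x \<sigma>) i (T_act y \<tau>))"
  then have q: "q < n + m - 1"
    using assms by (simp add: length_T_comp)
  note lhs = nth_T_comp_T_act[OF x y(1) i q, of \<sigma> \<tau>]
  have rhs: "T_act (T_comp x (\<sigma> i) y) (perm_comp n m \<sigma> i \<tau>) ! q =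
      T_comp x (\<sigma> i) y ! (perm_comp n m \<sigma> i \<tau> (Suc q) - 1)"
    using nth_T_act[of q "T_comp x (\<sigma> i) y"] q assms \<sigma>i by (simp add: length_T_comp)
  have shifted: "T_comp x (\<sigma> i) y ! ((if \<sigma> k < \<sigma> i then \<sigma> k else \<sigma> k + m - 1) - 1)
      = x ! (\<sigma> k - 1)" if "1 \<le> k" "k \<le> n" "k \<noteq> i" for k
  proof -
    have "\<sigma> k \<noteq> \<sigma> i"
      using permutes_inj[OF \<sigma>] that(3) by (meson injD)
    then show ?thesis
      using nth_T_comp_shift[of "\<sigma> i" x "\<sigma> k" y, unfolded y(1)]
        permutes_interval_bounds[OF \<sigma> that(1,2)] \<sigma>i x y by simp
  qed
  consider (before) "q < i - 1" | (inside) "i - 1 \<le> q" "q < i - 1 + m" | (after) "i - 1 + m \<le> q"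
    by linarith
  then show "T_comp (T_act x \<sigma>) i (T_act y \<tau>) ! q =
      T_act (T_comp x (\<sigma> i) y) (perm_comp n m \<sigma> i \<tau>) ! q"
  proof cases
    case before
    then show ?thesis
      using lhs rhs perm_comp_before[of "Suc q" i] shifted[of "Suc q"] i by auto
  next
    case inside
    define r where "r = \<tau> (Suc (q - (i - 1)))"
    have r: "1 \<le> r" "r \<le> m"
      using permutes_interval_bounds[OF \<tau>, of "Suc (q - (i - 1))"] inside by (auto simp: r_def)
    have "perm_comp n m \<sigma> i \<tau> (Suc q) - 1 = \<sigma> i - 1 + (r - 1)"
      using perm_comp_inside[of i "Suc q" m n \<sigma> \<tau>] inside i \<sigma>i r
      by (simp add: r_def Suc_diff_le)
    then have "T_act (T_comp x (\<sigma> i) y) (perm_comp n m \<sigma> i \<tau>) ! q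
        = x ! (\<sigma> i - 1) * y ! (r - 1)"
      using rhs nth_T_comp_inside[of "\<sigma> i" x r y] \<sigma>i r x y by simp
    then show ?thesis
      using lhs inside by (simp add: r_def)
  next
    case after
    then show ?thesis
      using lhs rhs perm_comp_after[of i m "Suc q" n] shifted[of "Suc q - m + 1"] q i y
      by auto
  qed
qed

lemma length_T_unit [simp]: "length T_unit = 1"
  by (simp add: T_unit_def)

lemma TM_iff: "x \<in> TM n \<longleftrightarrow> 1 \<le> n \<and> length x = n"
  unfolding TM_def by simp

lemma sym_set_operad_TM: "sym_set_operad TM T_comp T_act T_unit"
  unfolding sym_set_operad_def
proof (intro conjI allI impI)
  fix n m i j and x y z :: "'a::monoid_mult list"
  assume "x \<in> TM n" "y \<in> TM m" "1 \<le> i" "i \<le> n" "1 \<le> j" "j \<le> m"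
  then show "T_comp (T_comp x i y) (i + j - 1) z = T_comp x i (T_comp y j z)"
    by (intro T_comp_assoc_sequential) (auto simp: TM_iff)
next
  fix n m i j and x y z :: "'a::monoid_mult list"
  assume "x \<in> TM n" "y \<in> TM m" "1 \<le> i" "i < j" "j \<le> n"
  then show "T_comp (T_comp x i y) (j + m - 1) z = T_comp (T_comp x j z) i y"
    using T_comp_assoc_parallel[of i j x y z] by (simp add: TM_iff)
next
  fix n \<sigma> \<tau> and x :: "'a::monoid_mult list"
  assume "x \<in> TM n" "\<tau> permutes {1..n}"
  then show "T_act (T_act x \<sigma>) \<tau> = T_act x (\<sigma> \<circ> \<tau>)"
    by (simp add: TM_iff T_act_T_act)
next
  fix n m \<sigma> \<tau> i and x y :: "'a::monoid_mult list"
  assume "x \<in> TM n" "y \<in> TM m" "\<sigma> permutes {1..n}" "\<tau> permutes {1..m}" "1 \<le> i" "i \<le> n"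
  then show "T_comp (T_act x \<sigma>) i (T_act y \<tau>) = T_act (T_comp x (\<sigma> i) y) (perm_comp n m \<sigma> i \<tau>)"
    by (simp add: TM_iff T_comp_T_act)
qed (auto simp: TM_iff T_comp_unit_left[simplified] T_comp_unit_right length_T_comp T_act_id)

lemma T_map_T_comp:
  "monoid_hom \<theta> \<Longrightarrow> 1 \<le> i \<Longrightarrow> i \<le> length x \<Longrightarrow>
    T_map \<theta> (T_comp x i y) = T_comp (T_map \<theta> x) i (T_map \<theta> y)"
  unfolding T_map_def T_comp_def monoid_hom_def by (simp add: take_map drop_map)

lemma T_map_T_act:
  assumes "length x = n" "\<sigma> permutes {1..n}"
  shows "T_map \<theta> (T_act x \<sigma>) = T_act (T_map \<theta> x) \<sigma>"
proof (rule nth_equalityI)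
  fix q assume "q < length (T_map \<theta> (T_act x \<sigma>))"
  then have q: "q < n" using assms by (simp add: T_map_def)
  then have "\<sigma> (Suc q) - 1 < n"
    using permutes_interval_bounds[OF assms(2), of "Suc q"] by auto
  then show "T_map \<theta> (T_act x \<sigma>) ! q = T_act (T_map \<theta> x) \<sigma> ! q"
    using q assms by (simp add: nth_T_act T_map_def)
qed (simp add: T_map_def)

lemma operad_morphism_T_map:
  "monoid_hom \<theta> \<Longrightarrow> operad_morphism TM T_comp T_act T_unit TM T_comp T_act T_unit (T_map \<theta>)"
  unfolding operad_morphism_def TM_iff
  by (auto simp: T_map_T_comp T_map_T_act) (simp_all add: T_map_def T_unit_def monoid_hom_def)

lemma surj_T_map:
  fixes \<theta> :: "'a::monoid_mult \<Rightarrow> 'b::monoid_mult"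
  assumes "surj \<theta>"
  shows "T_map \<theta> ` (\<Union>n. TM n) = (\<Union>n. TM n)"
proof
  show "T_map \<theta> ` (\<Union>n. TM n) \<subseteq> (\<Union>n. TM n)"
    by (auto simp: TM_def T_map_def)
  show "(\<Union>n. TM n) \<subseteq> T_map \<theta> ` (\<Union>n. TM n)"
  proof
    fix ys :: "'b list" assume "ys \<in> (\<Union>n. TM n)"
    then have "map (inv \<theta>) ys \<in> (\<Union>n. TM n)"
      by (simp add: TM_iff)
    moreover have "ys = T_map \<theta> (map (inv \<theta>) ys)"
      using assms by (simp add: T_map_def surj_f_inv_f map_idI)
    ultimately show "ys \<in> T_map \<theta> ` (\<Union>n. TM n)"
      by (rule image_eqI[rotated])
  qed
qed

theorem mainTheorem1:
  fixes \<theta> :: "'a::monoid_mult \<Rightarrow> 'b::monoid_mult"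
    and \<phi> :: "'c::monoid_mult \<Rightarrow> 'a"
  shows "sym_set_operad (TM :: nat \<Rightarrow> 'a list set) T_comp T_act T_unit
    \<and> (monoid_hom \<theta> \<longrightarrow>
         operad_morphism (TM :: nat \<Rightarrow> 'a list set) T_comp T_act T_unit
                         (TM :: nat \<Rightarrow> 'b list set) T_comp T_act T_unit (T_map \<theta>))
    \<and> (\<forall>x \<in> (\<Union>n. TM n). T_map (id :: 'a \<Rightarrow> 'a) x = x)
    \<and> (monoid_hom \<theta> \<longrightarrow> monoid_hom \<phi> \<longrightarrow>
         (\<forall>x \<in> (\<Union>n. TM n). T_map (\<theta> \<circ> \<phi>) x = T_map \<theta> (T_map \<phi> x)))
    \<and> (monoid_hom \<theta> \<longrightarrow> inj \<theta> \<longrightarrow> inj_on (T_map \<theta>) (\<Union>n. TM n))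
    \<and> (monoid_hom \<theta> \<longrightarrow> surj \<theta> \<longrightarrow> T_map \<theta> ` (\<Union>n. TM n) = (\<Union>n. TM n))"
proof (intro conjI impI)
  show "sym_set_operad TM T_comp T_act T_unit"
    by (rule sym_set_operad_TM)
  show "operad_morphism TM T_comp T_act T_unit TM T_comp T_act T_unit (T_map \<theta>)"
    if "monoid_hom \<theta>" using that by (rule operad_morphism_T_map)
  show "inj_on (T_map \<theta>) (\<Union>n. TM n)" if "inj \<theta>"
    using inj_mapI[OF that] unfolding T_map_def by (rule inj_on_subset) simp
  show "T_map \<theta> ` (\<Union>n. TM n) = (\<Union>n. TM n)" if "surj \<theta>"
    using that by (rule surj_T_map)
qed (simp_all add: T_map_def)

end
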